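(* Let $(\mathcal H,X)$ be a stable arrangement of $n$ hyperplanes in $\mathbb R^d$ and $\mathcal C=\mathrm{code}(\mathcal H,X)$. Then $\mathrm{cham}(\mathcal H,X)=\mathrm{cham}(\mathcal C)$. Moreover, each facet $\sigma$ of $\mathrm{cham}(\mathcal C)$ has a unique chamber $T\in\Gamma(\mathcal C)$.
   Context: An oriented affine hyperplane is $H_i=\{x:w_i\cdot x-h_i=0\}$, $w_i\neq0$, $H_i^+=\{w_i\cdot x-h_i>0\}$. For $\mathcal H=\{H_1,\dots,H_n\}$ and open convex $X$, the atom of $\sigma$ is $A_\sigma=\bigl(\bigcap_{i\in\sigma}(H_i^+\cap X)\bigr)\setminus\bigcup_{j\notin\sigma}H_j^+$ ($A_\emptyset=X\setminus\bigcup_iH_i^+$), and $\mathrm{code}(\mathcal H,X)=\{\sigma:A_\sigma\neq\emptyset\}$. $(\mathcal H,X)$ is stable if $X$ is open convex and whenever $X\cap H_\sigma\ne\emptyset$, $\dim H_\sigma=d-|\sigma|$, where $H_\sigma=\bigcap_{i\in\sigma}H_i$ and $H_\emptyset=\mathbb R^d$. The geometric chamber complex is $\mathrm{cham}(\mathcal H,X)=\{\sigma\subseteq[n]:H_\sigma\cap X\neq\emptyset\}$. Polar complex: $\Gamma(\mathcal C)$ on $[n]\sqcup\{\bar1,\dots,\bar n\}$ consists of all subsets of $\Sigma(\sigma)=\sigma\sqcup\{\bar i:i\notin\sigma\}$, $\sigma\in\mathcal C$. The support $\underline T$ of a face $T$ is the set of $i$ with $i\in T$ or $\bar i\in T$.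 For $S\subseteq[n]$, $\Gamma(2^S)$ is the complex on $S\sqcup\{\bar i:i\in S\}$ whose faces are the subsets containing no pair $\{i,\bar i\}$. $\operatorname{link}_T\Delta=\{\nu\in\Delta:\nu\cap T=\emptyset,\nu\cup T\in\Delta\}$. The combinatorial chamber complex $\mathrm{cham}(\mathcal C)$ is the set of $\sigma\subseteq[n]$ for which there is $T\in\Gamma(\mathcal C)$ with $\underline T=[n]\setminus\sigma$ and $\operatorname{link}_T\Gamma(\mathcal C)=\Gamma(2^\sigma)$; such a $T$ is called a chamber of $\sigma$. *)

theory Defs
  imports "HOL-Analysis.Analysis"
begin

definition hplane :: "(nat \<Rightarrow> 'a::euclidean_space) \<Rightarrow> (nat \<Rightarrow> real) \<Rightarrow> nat \<Rightarrow> 'a set" where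
  "hplane w h i = {x. w i \<bullet> x - h i = 0}"

definition hpos :: "(nat \<Rightarrow> 'a::euclidean_space) \<Rightarrow> (nat \<Rightarrow> real) \<Rightarrow> nat \<Rightarrow> 'a set" where
  "hpos w h i = {x. w i \<bullet> x - h i > 0}"

definition Hint :: "(nat \<Rightarrow> 'a::euclidean_space) \<Rightarrow> (nat \<Rightarrow> real) \<Rightarrow> nat set \<Rightarrow> 'a set" where
  "Hint w h \<sigma> = (\<Inter>i\<in>\<sigma>. hplane w h i)"

definition atom :: "nat \<Rightarrow> (nat \<Rightarrow> 'a::euclidean_space) \<Rightarrow> (nat \<Rightarrow> real) \<Rightarrow> 'a set \<Rightarrow> nat set \<Rightarrow> 'a set" where
  "atom n w h X \<sigma> =
     (if \<sigma> = {} then X - (\<Union>i\<in>{..<n}. hpos w h i)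
      else (\<Inter>i\<in>\<sigma>. hpos w h i \<inter> X) - (\<Union>j\<in>{..<n} - \<sigma>. hpos w h j))"

definition code :: "nat \<Rightarrow> (nat \<Rightarrow> 'a::euclidean_space) \<Rightarrow> (nat \<Rightarrow> real) \<Rightarrow> 'a set \<Rightarrow> nat set set" where
  "code n w h X = {\<sigma>. \<sigma> \<subseteq> {..<n} \<and> atom n w h X \<sigma> \<noteq> {}}"

definition stable :: "nat \<Rightarrow> (nat \<Rightarrow> 'a::euclidean_space) \<Rightarrow> (nat \<Rightarrow> real) \<Rightarrow> 'a set \<Rightarrow> bool" where
  "stable n w h X \<longleftrightarrow> open X \<and> convex X \<and>
     (\<forall>\<sigma>. \<sigma> \<subseteq> {..<n} \<longrightarrow> X \<inter> Hint w h \<sigma> \<noteq> {} \<longrightarrow>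
        aff_dim (Hint w h \<sigma>) = int DIM('a) - int (card \<sigma>))"

definition geo_cham :: "nat \<Rightarrow> (nat \<Rightarrow> 'a::euclidean_space) \<Rightarrow> (nat \<Rightarrow> real) \<Rightarrow> 'a set \<Rightarrow> nat set set" where
  "geo_cham n w h X = {\<sigma>. \<sigma> \<subseteq> {..<n} \<and> Hint w h \<sigma> \<inter> X \<noteq> {}}"

text \<open>Polar complex. Vertex (i, True) stands for i, vertex (i, False) for bar i.\<close>
definition Sig :: "nat \<Rightarrow> nat set \<Rightarrow> (nat \<times> bool) set" where
  "Sig n \<sigma> = {(i, True) | i. i \<in> \<sigma>} \<union> {(i, False) | i. i \<in> {..<n} \<and> i \<notin> \<sigma>}"

definition polar :: "nat \<Rightarrow> nat set set \<Rightarrow> (nat \<times> bool) set set" where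
  "polar n C = {T. \<exists>\<sigma>\<in>C. T \<subseteq> Sig n \<sigma>}"

definition supp :: "(nat \<times> bool) set \<Rightarrow> nat set" where
  "supp T = fst ` T"

definition polar_full :: "nat set \<Rightarrow> (nat \<times> bool) set set" where
  "polar_full S = {T. T \<subseteq> S \<times> UNIV \<and> (\<forall>i. \<not> ((i, True) \<in> T \<and> (i, False) \<in> T))}"

definition link :: "'v set \<Rightarrow> 'v set set \<Rightarrow> 'v set set" where
  "link T \<Delta> = {\<nu>. \<nu> \<in> \<Delta> \<and> \<nu> \<inter> T = {} \<and> \<nu> \<union> T \<in> \<Delta>}"

definition is_chamber :: "nat \<Rightarrow> nat set set \<Rightarrow> nat set \<Rightarrow> (nat \<times> bool) set \<Rightarrow> bool" where
  "is_chamber n C \<sigma> T \<longleftrightarrow> T \<in> polar n C \<and> supp T = {..<n} - \<sigma> \<and>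
     link T (polar n C) = polar_full \<sigma>"

definition comb_cham :: "nat \<Rightarrow> nat set set \<Rightarrow> nat set set" where
  "comb_cham n C = {\<sigma>. \<sigma> \<subseteq> {..<n} \<and> (\<exists>T. is_chamber n C \<sigma> T)}"

definition facet :: "'v set \<Rightarrow> 'v set set \<Rightarrow> bool" where
  "facet \<sigma> \<Delta> \<longleftrightarrow> \<sigma> \<in> \<Delta> \<and> (\<forall>\<tau>\<in>\<Delta>. \<sigma> \<subseteq> \<tau> \<longrightarrow> \<tau> = \<sigma>)"

end

(*
  If H_sigma meets X, stability gives a point p of H_sigma \<inter> X on no other hyperplane, and
  vectors v with prescribed values w_i \<bullet> v, i \<in> sigma. Moving from p a little along such v
  reaches every open orthant around H_sigma without changing the signs of p off sigma, so these
  signs form a chamber of sigma. Conversely, a chamber T of sigma forces X to meet every closed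
  orthant of the hyperplanes in sigma, and a convex set meeting all these orthants meets their
  intersection H_sigma: cross the hyperplanes one at a time by the intermediate value theorem.
  Finally, two chambers of sigma with opposite signs at some j together make X meet every closed
  orthant of sigma \<union> {j}; then sigma \<union> {j} is a face, so sigma is not a facet.
*)
theory Submission
  imports Defs
begin

definition sign_face :: "nat set \<Rightarrow> (nat \<Rightarrow> bool) \<Rightarrow> (nat \<times> bool) set" where
  "sign_face S \<epsilon> = (\<lambda>i. (i, \<epsilon> i)) ` S"

definition weak_cell ::
    "(nat \<Rightarrow> 'a::euclidean_space) \<Rightarrow> (nat \<Rightarrow> real) \<Rightarrow> (nat \<times> bool) set \<Rightarrow> 'a set" where
  "weak_cell w h \<nu> = {x. \<forall>(i, b)\<in>\<nu>. if b then h i \<le> w i \<bullet> x else w i \<bullet> x \<le> h i}"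

lemma sign_face_in_polar_full: "sign_face S \<epsilon> \<in> polar_full S"
  unfolding sign_face_def polar_full_def by auto

lemma sign_face_cong: "(\<And>i. i \<in> S \<Longrightarrow> \<epsilon> i = \<delta> i) \<Longrightarrow> sign_face S \<epsilon> = sign_face S \<delta>"
  unfolding sign_face_def by auto

lemma sign_face_insert: "sign_face (insert j S) \<epsilon> = insert (j, \<epsilon> j) (sign_face S \<epsilon>)"
  unfolding sign_face_def by simp

lemma sign_face_insert_update:
  "j \<notin> S \<Longrightarrow> sign_face (insert j S) (\<epsilon>(j := b)) = insert (j, b) (sign_face S \<epsilon>)"
proof -
  assume "j \<notin> S"
  then have "sign_face S (\<epsilon>(j := b)) = sign_face S \<epsilon>"
    by (intro sign_face_cong) auto
  then show ?thesis by (simp add: sign_face_insert)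
qed

lemma weak_cell_antimono: "\<nu> \<subseteq> \<mu> \<Longrightarrow> weak_cell w h \<mu> \<subseteq> weak_cell w h \<nu>"
  unfolding weak_cell_def by blast

lemma mem_weak_cell_insert:
  "x \<in> weak_cell w h (insert (j, b) \<nu>) \<longleftrightarrow>
    (if b then h j \<le> w j \<bullet> x else w j \<bullet> x \<le> h j) \<and> x \<in> weak_cell w h \<nu>"
  unfolding weak_cell_def by auto

lemma convex_weak_cell: "convex (weak_cell w h \<nu>)"
proof -
  have "weak_cell w h \<nu> =
      (\<Inter>(i, b)\<in>\<nu>. if b then {x. w i \<bullet> x \<ge> h i} else {x. w i \<bullet> x \<le> h i})"
    unfolding weak_cell_def by (auto split: if_splits)
  then show ?thesis
    by (auto intro!: convex_INT simp: convex_halfspace_le convex_halfspace_ge)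
qed

lemma mem_weak_cell_sign_face: "x \<in> weak_cell w h (sign_face S (\<lambda>i. x \<in> hpos w h i))"
  unfolding weak_cell_def sign_face_def hpos_def by auto

lemma Sig_functional: "(i, b) \<in> Sig n \<tau> \<Longrightarrow> (i, b') \<in> Sig n \<tau> \<Longrightarrow> b = b'"
  unfolding Sig_def by auto

lemma polar_subset: "\<mu> \<in> polar n C \<Longrightarrow> \<nu> \<subseteq> \<mu> \<Longrightarrow> \<nu> \<in> polar n C"
  unfolding polar_def by blast

lemma same_supp_opposite:
  assumes "supp T = supp T'" "T \<noteq> T'"
  shows "\<exists>j b. (j, b) \<in> T \<and> (j, \<not> b) \<in> T'"
proof -
  have opposite: "(j, \<not> b) \<in> B" if "supp A = supp B" "(j, b) \<in> A" "(j, b) \<notin> B" for A B j b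
  proof -
    from that(1,2) have "j \<in> supp B" unfolding supp_def by force
    then obtain b' where "(j, b') \<in> B" unfolding supp_def by force
    with that(3) show ?thesis by (cases b; cases b') auto
  qed
  from assms(2) consider (left) j b where "(j, b) \<in> T" "(j, b) \<notin> T'"
    | (right) j b where "(j, b) \<in> T'" "(j, b) \<notin> T"
    by auto
  then show ?thesis
  proof cases
    case left
    then show ?thesis using opposite[OF assms(1)] by blast
  next
    case right
    then show ?thesis using opposite[OF assms(1)[symmetric]] by force
  qed
qed

lemma is_chamberI:
  assumes C: "\<forall>\<tau>\<in>C. \<tau> \<subseteq> {..<n}"
    and faces: "\<And>\<nu>. \<nu> \<in> polar_full \<sigma> \<Longrightarrow> \<nu> \<union> sign_face ({..<n} - \<sigma>) \<epsilon> \<in> polar n C"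
  shows "is_chamber n C \<sigma> (sign_face ({..<n} - \<sigma>) \<epsilon>)"
proof -
  define T where "T = sign_face ({..<n} - \<sigma>) \<epsilon>"
  have "T \<in> polar n C"
    using faces[of "{}"] unfolding T_def polar_full_def by simp
  moreover have "supp T = {..<n} - \<sigma>"
    unfolding T_def supp_def sign_face_def by force
  moreover have "\<nu> \<in> polar_full \<sigma>" if "\<nu> \<in> link T (polar n C)" for \<nu>
  proof -
    from that obtain \<tau> where "\<tau> \<in> C" "\<nu> \<union> T \<subseteq> Sig n \<tau>" and disjoint: "\<nu> \<inter> T = {}"
      unfolding link_def polar_def by blast
    then have \<nu>\<tau>: "\<nu> \<subseteq> Sig n \<tau>" and T\<tau>: "T \<subseteq> Sig n \<tau>" and "\<tau> \<subseteq> {..<n}"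
      using C by auto
    have "i \<in> \<sigma>" if "(i, b) \<in> \<nu>" for i b
    proof (rule ccontr)
      assume "i \<notin> \<sigma>"
      moreover have "i < n"
        using \<nu>\<tau> that \<open>\<tau> \<subseteq> {..<n}\<close> unfolding Sig_def by auto
      ultimately have "(i, \<epsilon> i) \<in> T" unfolding T_def sign_face_def by simp
      with that \<nu>\<tau> T\<tau> have "b = \<epsilon> i" using Sig_functional by blast
      with that \<open>(i, \<epsilon> i) \<in> T\<close> disjoint show False by blast
    qed
    moreover have "\<not> ((i, True) \<in> \<nu> \<and> (i, False) \<in> \<nu>)" for i
      using \<nu>\<tau> Sig_functional[of i True n \<tau> False] by blast
    ultimately show ?thesis unfolding polar_full_def by auto
  qed
  moreover have "\<nu> \<in> link T (polar n C)" if "\<nu> \<in> polar_full \<sigma>" for \<nu>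
  proof -
    have "\<nu> \<union> T \<in> polar n C" using faces[OF that] unfolding T_def .
    moreover have "\<nu> \<inter> T = {}"
      using that unfolding polar_full_def T_def sign_face_def by auto
    ultimately show ?thesis unfolding link_def by (auto intro: polar_subset)
  qed
  ultimately show ?thesis
    unfolding is_chamber_def T_def by blast
qed

lemma mem_atom_iff:
  assumes "\<tau> \<subseteq> {..<n}"
  shows "q \<in> atom n w h X \<tau> \<longleftrightarrow> q \<in> X \<and> \<tau> = {i. i < n \<and> q \<in> hpos w h i}"
  using assms unfolding atom_def by (auto split: if_splits)

lemma Sig_points_positive_set:
  "Sig n {i. i < n \<and> q \<in> hpos w h i} = sign_face {..<n} (\<lambda>i. q \<in> hpos w h i)"
  unfolding Sig_def sign_face_def by auto

lemma polar_code_iff: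
  "\<nu> \<in> polar n (code n w h X) \<longleftrightarrow> (\<exists>q\<in>X. \<nu> \<subseteq> sign_face {..<n} (\<lambda>i. q \<in> hpos w h i))"
proof
  assume "\<nu> \<in> polar n (code n w h X)"
  then obtain \<tau> q where \<tau>: "\<tau> \<subseteq> {..<n}" "q \<in> atom n w h X \<tau>" "\<nu> \<subseteq> Sig n \<tau>"
    unfolding polar_def code_def by blast
  then have "q \<in> X" "\<tau> = {i. i < n \<and> q \<in> hpos w h i}"
    by (simp_all add: mem_atom_iff)
  with \<tau>(3) show "\<exists>q\<in>X. \<nu> \<subseteq> sign_face {..<n} (\<lambda>i. q \<in> hpos w h i)"
    by (auto simp: Sig_points_positive_set)
next
  assume "\<exists>q\<in>X. \<nu> \<subseteq> sign_face {..<n} (\<lambda>i. q \<in> hpos w h i)"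
  then obtain q where q: "q \<in> X" "\<nu> \<subseteq> sign_face {..<n} (\<lambda>i. q \<in> hpos w h i)" by blast
  define \<tau> where "\<tau> = {i. i < n \<and> q \<in> hpos w h i}"
  have "\<tau> \<subseteq> {..<n}" unfolding \<tau>_def by auto
  moreover have "q \<in> atom n w h X \<tau>"
    using \<open>\<tau> \<subseteq> {..<n}\<close> by (subst mem_atom_iff) (auto simp: q(1) \<tau>_def)
  moreover have "\<nu> \<subseteq> Sig n \<tau>"
    using q(2) unfolding \<tau>_def Sig_points_positive_set .
  ultimately show "\<nu> \<in> polar n (code n w h X)"
    unfolding polar_def code_def by blast
qed

lemma polar_code_meets_weak_cell:
  assumes "\<nu> \<in> polar n (code n w h X)"
  shows "X \<inter> weak_cell w h \<nu> \<noteq> {}"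
  using assms weak_cell_antimono mem_weak_cell_sign_face unfolding polar_code_iff by blast

lemma hplane_eq: "hplane w h i = {x. w i \<bullet> x = h i}"
  unfolding hplane_def by auto

lemma Hint_insert: "Hint w h (insert j \<sigma>) = Hint w h \<sigma> \<inter> hplane w h j"
  unfolding Hint_def by auto

lemma mem_Hint: "x \<in> Hint w h \<sigma> \<longleftrightarrow> (\<forall>i\<in>\<sigma>. w i \<bullet> x = h i)"
  unfolding Hint_def hplane_def by auto

lemma affine_Hint: "affine (Hint w h \<sigma>)"
  unfolding Hint_def hplane_eq by (intro affine_Inter) (auto intro: affine_hyperplane)

lemma convex_meets_Hint:
  assumes "finite S" "convex K" "\<forall>\<epsilon>. K \<inter> weak_cell w h (sign_face S \<epsilon>) \<noteq> {}"
  shows "K \<inter> Hint w h S \<noteq> {}"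
  using assms
proof (induction S arbitrary: K rule: finite_induct)
  case empty
  then show ?case by (auto simp: Hint_def sign_face_def weak_cell_def)
next
  case (insert j S)
  have sign_cells: "K \<inter> hplane w h j \<inter> weak_cell w h (sign_face S \<epsilon>) \<noteq> {}" for \<epsilon>
  proof -
    define C where "C = K \<inter> weak_cell w h (sign_face S \<epsilon>)"
    have "connected C"
      unfolding C_def by (intro convex_connected convex_Int insert.prems convex_weak_cell)
    obtain x\<^sub>p where "x\<^sub>p \<in> K \<inter> weak_cell w h (sign_face (insert j S) (\<epsilon>(j := True)))"
      using insert.prems(2) by blast
    then have "x\<^sub>p \<in> C" "h j \<le> w j \<bullet> x\<^sub>p"
      using insert.hyps(2) by (simp_all add: C_def sign_face_insert_update mem_weak_cell_insert)
    obtain x\<^sub>m where "x\<^sub>m \<in> K \<inter> weak_cell w h (sign_face (insert j S) (\<epsilon>(j := False)))"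
      using insert.prems(2) by blast
    then have "x\<^sub>m \<in> C" "w j \<bullet> x\<^sub>m \<le> h j"
      using insert.hyps(2) by (simp_all add: C_def sign_face_insert_update mem_weak_cell_insert)
    obtain z where "z \<in> C" "w j \<bullet> z = h j"
      using connected_ivt_hyperplane[OF \<open>connected C\<close> \<open>x\<^sub>m \<in> C\<close> \<open>x\<^sub>p \<in> C\<close>]
        \<open>w j \<bullet> x\<^sub>m \<le> h j\<close> \<open>h j \<le> w j \<bullet> x\<^sub>p\<close> by blast
    then show ?thesis unfolding C_def hplane_def by auto
  qed
  have "convex (K \<inter> hplane w h j)"
    using insert.prems(1) by (simp add: hplane_eq convex_Int convex_hyperplane)
  with sign_cells have "K \<inter> hplane w h j \<inter> Hint w h S \<noteq> {}"
    using insert.IH by blast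
  then show ?case by (auto simp: Hint_insert)
qed

lemma chamber_meets_weak_cells:
  assumes "is_chamber n (code n w h X) \<sigma> T"
  shows "X \<inter> weak_cell w h (sign_face \<sigma> \<epsilon> \<union> T) \<noteq> {}"
proof -
  have "sign_face \<sigma> \<epsilon> \<in> link T (polar n (code n w h X))"
    using assms sign_face_in_polar_full[of \<sigma> \<epsilon>] by (simp add: is_chamber_def)
  then have "sign_face \<sigma> \<epsilon> \<union> T \<in> polar n (code n w h X)"
    by (simp add: link_def)
  then show ?thesis
    by (rule polar_code_meets_weak_cell)
qed

lemma comb_cham_subset_geo_cham:
  assumes "convex X"
  shows "comb_cham n (code n w h X) \<subseteq> geo_cham n w h X"
proof
  fix \<sigma> assume "\<sigma> \<in> comb_cham n (code n w h X)"
  then obtain T where \<sigma>: "\<sigma> \<subseteq> {..<n}" and T: "is_chamber n (code n w h X) \<sigma> T"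
    unfolding comb_cham_def by blast
  have "X \<inter> weak_cell w h (sign_face \<sigma> \<epsilon>) \<noteq> {}" for \<epsilon>
    using chamber_meets_weak_cells[OF T, of \<epsilon>] weak_cell_antimono[of "sign_face \<sigma> \<epsilon>"] by blast
  then have "X \<inter> Hint w h \<sigma> \<noteq> {}"
    using convex_meets_Hint[OF finite_subset[OF \<sigma>] assms] by simp
  with \<sigma> show "\<sigma> \<in> geo_cham n w h X"
    unfolding geo_cham_def by blast
qed

lemma opposite_chambers_extend_geo_cham:
  assumes "convex X" and \<sigma>: "\<sigma> \<subseteq> {..<n}"
    and T: "is_chamber n (code n w h X) \<sigma> T" and T': "is_chamber n (code n w h X) \<sigma> T'"
    and "(j, b) \<in> T" "(j, \<not> b) \<in> T'"
  shows "insert j \<sigma> \<in> geo_cham n w h X"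
proof -
  have j: "j \<in> {..<n} - \<sigma>"
    using T \<open>(j, b) \<in> T\<close> unfolding is_chamber_def supp_def by force
  have "X \<inter> weak_cell w h (sign_face (insert j \<sigma>) \<epsilon>) \<noteq> {}" for \<epsilon>
  proof (cases "\<epsilon> j = b")
    case True
    with \<open>(j, b) \<in> T\<close> have "sign_face (insert j \<sigma>) \<epsilon> \<subseteq> sign_face \<sigma> \<epsilon> \<union> T"
      by (auto simp: sign_face_insert)
    then show ?thesis
      using chamber_meets_weak_cells[OF T, of \<epsilon>] weak_cell_antimono by blast
  next
    case False
    with \<open>(j, \<not> b) \<in> T'\<close> have "sign_face (insert j \<sigma>) \<epsilon> \<subseteq> sign_face \<sigma> \<epsilon> \<union> T'"
      by (auto simp: sign_face_insert)
    then show ?thesis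
      using chamber_meets_weak_cells[OF T', of \<epsilon>] weak_cell_antimono by blast
  qed
  moreover have "finite (insert j \<sigma>)"
    using \<sigma> finite_subset by auto
  ultimately have "X \<inter> Hint w h (insert j \<sigma>) \<noteq> {}"
    using convex_meets_Hint[OF _ assms(1)] by simp
  with \<sigma> j show ?thesis
    unfolding geo_cham_def by blast
qed

lemma facet_chamber_unique:
  assumes "convex X" and geo_comb: "geo_cham n w h X \<subseteq> comb_cham n (code n w h X)"
    and facet: "facet \<sigma> (comb_cham n (code n w h X))"
    and T: "is_chamber n (code n w h X) \<sigma> T" and T': "is_chamber n (code n w h X) \<sigma> T'"
  shows "T = T'"
proof (rule ccontr)
  assume "T \<noteq> T'"
  then obtain j b where "(j, b) \<in> T" "(j, \<not> b) \<in> T'"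
    using same_supp_opposite T T' unfolding is_chamber_def by metis
  moreover have \<sigma>: "\<sigma> \<subseteq> {..<n}"
    using facet unfolding facet_def comb_cham_def by blast
  ultimately have "insert j \<sigma> \<in> comb_cham n (code n w h X)"
    using opposite_chambers_extend_geo_cham[OF assms(1) \<sigma> T T'] geo_comb by blast
  then have "insert j \<sigma> = \<sigma>"
    using facet unfolding facet_def by blast
  moreover have "j \<notin> \<sigma>"
    using T \<open>(j, b) \<in> T\<close> unfolding is_chamber_def supp_def by force
  ultimately show False by blast
qed

lemma stable_aff_dim_Hint_insert:
  fixes w :: "nat \<Rightarrow> 'a::euclidean_space"
  assumes "stable n w h X" "insert j \<sigma> \<subseteq> {..<n}" "j \<notin> \<sigma>" "X \<inter> Hint w h (insert j \<sigma>) \<noteq> {}"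
  shows "aff_dim (Hint w h (insert j \<sigma>)) = aff_dim (Hint w h \<sigma>) - 1"
proof -
  have "X \<inter> Hint w h \<sigma> \<noteq> {}"
    using assms(4) by (auto simp: Hint_insert)
  moreover have "card (insert j \<sigma>) = card \<sigma> + 1"
    using assms(2,3) finite_subset by fastforce
  ultimately show ?thesis
    using assms unfolding stable_def by simp
qed

lemma stable_generic_point:
  fixes w :: "nat \<Rightarrow> 'a::euclidean_space"
  assumes stable: "stable n w h X" and \<sigma>: "\<sigma> \<subseteq> {..<n}" and "X \<inter> Hint w h \<sigma> \<noteq> {}"
  shows "\<exists>p\<in>X \<inter> Hint w h \<sigma>. \<forall>j\<in>{..<n} - \<sigma>. p \<notin> hplane w h j"
proof -
  have "open X" using stable unfolding stable_def by blast
  have "finite J \<Longrightarrow> J \<subseteq> {..<n} - \<sigma> \<Longrightarrow> X \<inter> Hint w h \<sigma> - \<Union>(hplane w h ` J) \<noteq> {}" for J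
  proof (induction J rule: finite_induct)
    case empty
    then show ?case using assms(3) by simp
  next
    case (insert j J)
    define U where "U = X \<inter> Hint w h \<sigma> - \<Union>(hplane w h ` J)"
    have "U \<noteq> {}" using insert unfolding U_def by blast
    have "openin (top_of_set (Hint w h \<sigma>)) U"
    proof -
      have "open (X - \<Union>(hplane w h ` J))"
        using \<open>open X\<close> insert.hyps(1)
        by (intro open_Diff closed_Union) (auto simp: hplane_eq closed_hyperplane)
      moreover have "U = Hint w h \<sigma> \<inter> (X - \<Union>(hplane w h ` J))" unfolding U_def by blast
      ultimately show ?thesis by auto
    qed
    then have dim_U: "aff_dim U = aff_dim (Hint w h \<sigma>)"
      using aff_dim_openin affine_Hint \<open>U \<noteq> {}\<close> by blast
    show ?case
    proof
      \<comment> \<open>By stability, H_j cuts H_sigma in a set of smaller dimension, which cannot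
        contain the nonempty relatively open set U.\<close>
      assume "X \<inter> Hint w h \<sigma> - \<Union>(hplane w h ` insert j J) = {}"
      then have U_sub: "U \<subseteq> Hint w h (insert j \<sigma>)"
        unfolding U_def Hint_insert by blast
      then have "X \<inter> Hint w h (insert j \<sigma>) \<noteq> {}"
        using \<open>U \<noteq> {}\<close> unfolding U_def by blast
      then have "aff_dim (Hint w h (insert j \<sigma>)) = aff_dim (Hint w h \<sigma>) - 1"
        using stable_aff_dim_Hint_insert[OF stable] insert.prems \<sigma> by simp
      moreover have "aff_dim U \<le> aff_dim (Hint w h (insert j \<sigma>))"
        using U_sub by (rule aff_dim_subset)
      ultimately show False
        using dim_U by simp
    qed
  qed
  from this[of "{..<n} - \<sigma>"] show ?thesis by auto
qed

lemma stable_dual_vector: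
  fixes w :: "nat \<Rightarrow> 'a::euclidean_space"
  assumes stable: "stable n w h X" and \<sigma>: "\<sigma> \<subseteq> {..<n}" and "X \<inter> Hint w h \<sigma> \<noteq> {}" and "i \<in> \<sigma>"
  shows "\<exists>u. w i \<bullet> u = 1 \<and> (\<forall>k\<in>\<sigma> - {i}. w k \<bullet> u = 0)"
proof -
  define \<rho> where "\<rho> = \<sigma> - {i}"
  have \<sigma>_eq: "\<sigma> = insert i \<rho>" using \<open>i \<in> \<sigma>\<close> unfolding \<rho>_def by blast
  obtain p where p: "p \<in> Hint w h \<sigma>" using assms(3) by blast
  have dim: "aff_dim (Hint w h \<sigma>) = aff_dim (Hint w h \<rho>) - 1"
    using stable_aff_dim_Hint_insert[OF stable, of i \<rho>] \<sigma> assms(3)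
    unfolding \<sigma>_eq[symmetric] by (simp add: \<rho>_def)
  have "\<not> Hint w h \<rho> \<subseteq> hplane w h i"
  proof
    assume "Hint w h \<rho> \<subseteq> hplane w h i"
    then have "Hint w h \<sigma> = Hint w h \<rho>"
      unfolding \<sigma>_eq Hint_insert by blast
    with dim show False by simp
  qed
  then obtain y where y: "y \<in> Hint w h \<rho>" "w i \<bullet> y \<noteq> h i"
    unfolding hplane_eq by blast
  define u where "u = (1 / (w i \<bullet> y - h i)) *\<^sub>R (y - p)"
  have "w i \<bullet> p = h i" "\<forall>k\<in>\<rho>. w k \<bullet> p = h k"
    using p \<open>i \<in> \<sigma>\<close> unfolding \<sigma>_eq mem_Hint by auto
  then have "w i \<bullet> u = 1 \<and> (\<forall>k\<in>\<rho>. w k \<bullet> u = 0)"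
    using y unfolding u_def mem_Hint by (simp add: inner_diff_right)
  then show ?thesis unfolding \<rho>_def by blast
qed

lemma stable_exists_direction:
  fixes w :: "nat \<Rightarrow> 'a::euclidean_space"
  assumes "stable n w h X" "\<sigma> \<subseteq> {..<n}" "X \<inter> Hint w h \<sigma> \<noteq> {}"
  shows "\<exists>v. \<forall>i\<in>\<sigma>. w i \<bullet> v = s i"
proof -
  obtain u where u: "\<And>i. i \<in> \<sigma> \<Longrightarrow> w i \<bullet> u i = 1 \<and> (\<forall>k\<in>\<sigma> - {i}. w k \<bullet> u i = 0)"
    using stable_dual_vector[OF assms] by metis
  have "w i \<bullet> (\<Sum>k\<in>\<sigma>. s k *\<^sub>R u k) = s i" if "i \<in> \<sigma>" for i
  proof -
    have "w i \<bullet> (\<Sum>k\<in>\<sigma>. s k *\<^sub>R u k) = (\<Sum>k\<in>\<sigma>. if k = i then s k else 0)"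
      unfolding inner_sum_right using u that by (intro sum.cong) auto
    also have "\<dots> = s i"
      using that finite_subset[OF assms(2)] by simp
    finally show ?thesis .
  qed
  then show ?thesis by blast
qed

lemma small_step_keeps_signs:
  fixes w :: "nat \<Rightarrow> 'a::euclidean_space"
  assumes "open X" "p \<in> X" "finite J" "\<forall>j\<in>J. p \<notin> hplane w h j"
  shows "\<exists>t>0. p + t *\<^sub>R v \<in> X \<and> (\<forall>j\<in>J. p + t *\<^sub>R v \<in> hpos w h j \<longleftrightarrow> p \<in> hpos w h j)"
proof -
  have "((\<lambda>t. p + t *\<^sub>R v) \<longlongrightarrow> p + 0 *\<^sub>R v) (at_right 0)"
    by (intro tendsto_intros)
  then have lim: "((\<lambda>t. p + t *\<^sub>R v) \<longlongrightarrow> p) (at_right 0)"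
    by simp
  have "eventually (\<lambda>t. p + t *\<^sub>R v \<in> X) (at_right 0)"
    using topological_tendstoD[OF lim assms(1,2)] .
  moreover have "eventually (\<lambda>t. p + t *\<^sub>R v \<in> hpos w h j \<longleftrightarrow> p \<in> hpos w h j) (at_right 0)"
    if "j \<in> J" for j
  proof -
    have lim_j: "((\<lambda>t. w j \<bullet> (p + t *\<^sub>R v) - h j) \<longlongrightarrow> w j \<bullet> p - h j) (at_right 0)"
      by (intro tendsto_intros lim)
    have "w j \<bullet> p - h j \<noteq> 0" using assms(4) that unfolding hplane_def by blast
    then consider "w j \<bullet> p - h j > 0" | "w j \<bullet> p - h j < 0" by linarith
    then show ?thesis
    proof cases
      case 1
      then show ?thesis
        using order_tendstoD(1)[OF lim_j 1] unfolding hpos_def by (auto elim: eventually_mono)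
    next
      case 2
      then show ?thesis
        using order_tendstoD(2)[OF lim_j 2] unfolding hpos_def by (auto elim: eventually_mono)
    qed
  qed
  then have "eventually (\<lambda>t. \<forall>j\<in>J. p + t *\<^sub>R v \<in> hpos w h j \<longleftrightarrow> p \<in> hpos w h j) (at_right 0)"
    using assms(3) by (simp add: eventually_ball_finite)
  moreover have "eventually (\<lambda>t::real. 0 < t) (at_right 0)"
    by (rule eventually_at_right_less)
  ultimately have "eventually (\<lambda>t. 0 < t \<and> p + t *\<^sub>R v \<in> X \<and>
      (\<forall>j\<in>J. p + t *\<^sub>R v \<in> hpos w h j \<longleftrightarrow> p \<in> hpos w h j)) (at_right 0)"
    by eventually_elim blast
  then show ?thesis
    using eventually_happens'[OF trivial_limit_at_right_real] by blast
qed

lemma generic_point_faces: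
  fixes w :: "nat \<Rightarrow> 'a::euclidean_space"
  assumes "open X" "\<sigma> \<subseteq> {..<n}" and p: "p \<in> X \<inter> Hint w h \<sigma>"
    and generic: "\<forall>j\<in>{..<n} - \<sigma>. p \<notin> hplane w h j"
    and directions: "\<And>s. \<exists>v. \<forall>i\<in>\<sigma>. w i \<bullet> v = s i"
    and \<nu>: "\<nu> \<in> polar_full \<sigma>"
  shows "\<nu> \<union> sign_face ({..<n} - \<sigma>) (\<lambda>j. p \<in> hpos w h j) \<in> polar n (code n w h X)"
proof -
  obtain v where v: "\<forall>i\<in>\<sigma>. w i \<bullet> v = (if (i, True) \<in> \<nu> then 1 else -1)"
    using directions[of "\<lambda>i. if (i, True) \<in> \<nu> then 1 else -1"] by blast
  obtain t where "t > 0" and q: "p + t *\<^sub>R v \<in> X"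
    and signs: "\<forall>j\<in>{..<n} - \<sigma>. p + t *\<^sub>R v \<in> hpos w h j \<longleftrightarrow> p \<in> hpos w h j"
    using small_step_keeps_signs[OF assms(1) _ _ generic] p by blast
  define q where "q = p + t *\<^sub>R v"
  have sign_on_\<sigma>: "q \<in> hpos w h i \<longleftrightarrow> (i, True) \<in> \<nu>" if "i \<in> \<sigma>" for i
  proof -
    have "w i \<bullet> p = h i" using p that by (simp add: mem_Hint)
    then have "w i \<bullet> q - h i = t * (if (i, True) \<in> \<nu> then 1 else -1)"
      using v that unfolding q_def by (simp add: inner_add_right)
    then show ?thesis
      using \<open>t > 0\<close> unfolding hpos_def by (cases "(i, True) \<in> \<nu>") auto
  qed
  have "(i, b) \<in> sign_face {..<n} (\<lambda>i. q \<in> hpos w h i)" if "(i, b) \<in> \<nu>" for i b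
  proof -
    have "i \<in> \<sigma>" and "b = ((i, True) \<in> \<nu>)"
      using \<nu> that unfolding polar_full_def by (auto, (cases b; auto))
    with sign_on_\<sigma> assms(2)
    show ?thesis unfolding sign_face_def by auto
  qed
  then have "\<nu> \<subseteq> sign_face {..<n} (\<lambda>i. q \<in> hpos w h i)" by auto
  moreover have
    "sign_face ({..<n} - \<sigma>) (\<lambda>j. p \<in> hpos w h j) \<subseteq> sign_face {..<n} (\<lambda>i. q \<in> hpos w h i)"
    using signs unfolding q_def sign_face_def by auto
  ultimately show ?thesis
    using q unfolding polar_code_iff q_def by blast
qed

lemma geo_cham_subset_comb_cham:
  fixes w :: "nat \<Rightarrow> 'a::euclidean_space"
  assumes stable: "stable n w h X"
  shows "geo_cham n w h X \<subseteq> comb_cham n (code n w h X)"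
proof
  fix \<sigma> assume "\<sigma> \<in> geo_cham n w h X"
  then have \<sigma>: "\<sigma> \<subseteq> {..<n}" and meets: "X \<inter> Hint w h \<sigma> \<noteq> {}"
    unfolding geo_cham_def by blast+
  obtain p where p: "p \<in> X \<inter> Hint w h \<sigma>" and generic: "\<forall>j\<in>{..<n} - \<sigma>. p \<notin> hplane w h j"
    using stable_generic_point[OF stable \<sigma> meets] by blast
  have "open X" using stable unfolding stable_def by blast
  have "is_chamber n (code n w h X) \<sigma> (sign_face ({..<n} - \<sigma>) (\<lambda>j. p \<in> hpos w h j))"
  proof (rule is_chamberI)
    show "\<forall>\<tau>\<in>code n w h X. \<tau> \<subseteq> {..<n}" unfolding code_def by blast
  next
    fix \<nu> assume "\<nu> \<in> polar_full \<sigma>"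
    then show "\<nu> \<union> sign_face ({..<n} - \<sigma>) (\<lambda>j. p \<in> hpos w h j) \<in> polar n (code n w h X)"
      using generic_point_faces[OF \<open>open X\<close> \<sigma> p generic]
        stable_exists_direction[OF stable \<sigma> meets] by blast
  qed
  with \<sigma> show "\<sigma> \<in> comb_cham n (code n w h X)"
    unfolding comb_cham_def by blast
qed

theorem proposition3p12:
  fixes n :: nat and w :: "nat \<Rightarrow> 'a::euclidean_space" and h :: "nat \<Rightarrow> real" and X :: "'a set"
  assumes "\<forall>i<n. w i \<noteq> 0"
    and "stable n w h X"
  shows "geo_cham n w h X = comb_cham n (code n w h X) \<and>
         (\<forall>\<sigma>. facet \<sigma> (comb_cham n (code n w h X)) \<longrightarrow>
           (\<exists>!T. is_chamber n (code n w h X) \<sigma> T))"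
proof -
  have "convex X" using assms(2) unfolding stable_def by blast
  have geo_comb: "geo_cham n w h X \<subseteq> comb_cham n (code n w h X)"
    using geo_cham_subset_comb_cham[OF assms(2)] .
  moreover have "\<exists>!T. is_chamber n (code n w h X) \<sigma> T"
    if facet: "facet \<sigma> (comb_cham n (code n w h X))" for \<sigma>
  proof -
    obtain T where "is_chamber n (code n w h X) \<sigma> T"
      using facet unfolding facet_def comb_cham_def by blast
    then show ?thesis
      using facet_chamber_unique[OF \<open>convex X\<close> geo_comb facet] by blast
  qed
  ultimately show ?thesis
    using comb_cham_subset_geo_cham[OF \<open>convex X\<close>] by blast
qed

end
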